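(* For arbitrary quasi-copulas $A$ and $B$ on $[0,1]^2$, the pairs $(A,A_M)$ and $(B_O,B)$ are imprecise copulas. The same holds in the discrete setting for discrete quasi-copulas on a mesh, with defects computed using rectangles with corners in the mesh.
   Context: A quasi-copula is $Q:[0,1]^2\to\mathbb{R}$ grounded ($Q(x,0)=Q(0,y)=0$), with neutral element $1$ ($Q(x,1)=x$, $Q(1,y)=y$), and with $V_Q(R)\ge0$ for each rectangle having a side on the boundary of $[0,1]^2$, where $V_Q([s_1,s_2]\times[t_1,t_2])=Q(s_1,t_1)+Q(s_2,t_2)-Q(s_2,t_1)-Q(s_1,t_2)$. Defects: for $\mathbf{x}\in[0,1]^2$ let $\mathcal{R}_\nearrow(\mathbf{x}),\mathcal{R}_\swarrow(\mathbf{x}),\mathcal{R}_\nwarrow(\mathbf{x}),\mathcal{R}_\searrow(\mathbf{x})$ be the sets of (possibly degenerate) rectangles in $[0,1]^2$ having $\mathbf{x}$ as southwest, northeast, southeast, northwest corner respectively; $D^Q_\bullet(\mathbf{x})=\inf\{V_Q(R):R\in\mathcal{R}_\bullet(\mathbf{x})\}$; $D^Q_M=\min(D^Q_\nearrow,D^Q_\swarrow)$, $D^Q_O=\min(D^Q_\nwarrow,D^Q_\searrow)$; $Q_M=Q-D^Q_M$ and $Q_O=Q+D^Q_O$. An imprecise copula is a pair $(A,B)$ of grounded functions with neutral element $1$ such that for every rectangle with southwest, southeast, northeast, northwest corners $\mathbf{a},\mathbf{b},\mathbf{c},\mathbf{d}$: $A(\mathbf{a})+B(\mathbf{c})-A(\mathbf{b})-A(\mathbf{d})\ge0$,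 $B(\mathbf{a})+A(\mathbf{c})-A(\mathbf{b})-A(\mathbf{d})\ge0$, $B(\mathbf{a})+B(\mathbf{c})-B(\mathbf{b})-A(\mathbf{d})\ge0$, $B(\mathbf{a})+B(\mathbf{c})-A(\mathbf{b})-B(\mathbf{d})\ge0$. (Discrete versions: same definitions with $[0,1]^2$ replaced by a mesh $\delta_x\times\delta_y$, all points and rectangle corners taken in the mesh.) *)

theory Defs
  imports Complex_Main
begin

text \<open>All notions are relative to a domain X \<times> Y \<subseteq> [0,1]^2 with 0,1 in X and Y:
  the continuous case is X = Y = {0..1}, the discrete case is X, Y meshes.
  Functions are curried, Q x y; only values on X \<times> Y are relevant.\<close>

definition is_mesh :: "real set \<Rightarrow> bool" where
  "is_mesh D \<longleftrightarrow> finite D \<and> D \<subseteq> {0..1} \<and> 0 \<in> D \<and> 1 \<in> D"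

definition Vol :: "(real \<Rightarrow> real \<Rightarrow> real) \<Rightarrow> real \<Rightarrow> real \<Rightarrow> real \<Rightarrow> real \<Rightarrow> real" where
  "Vol Q s1 s2 t1 t2 = Q s1 t1 + Q s2 t2 - Q s2 t1 - Q s1 t2"

definition grounded :: "real set \<Rightarrow> real set \<Rightarrow> (real \<Rightarrow> real \<Rightarrow> real) \<Rightarrow> bool" where
  "grounded X Y Q \<longleftrightarrow> (\<forall>x\<in>X. Q x 0 = 0) \<and> (\<forall>y\<in>Y. Q 0 y = 0)"

definition neutral_one :: "real set \<Rightarrow> real set \<Rightarrow> (real \<Rightarrow> real \<Rightarrow> real) \<Rightarrow> bool" where
  "neutral_one X Y Q \<longleftrightarrow> (\<forall>x\<in>X. Q x 1 = x) \<and> (\<forall>y\<in>Y. Q 1 y = y)"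

definition quasi_copula :: "real set \<Rightarrow> real set \<Rightarrow> (real \<Rightarrow> real \<Rightarrow> real) \<Rightarrow> bool" where
  "quasi_copula X Y Q \<longleftrightarrow> grounded X Y Q \<and> neutral_one X Y Q \<and>
     (\<forall>s1\<in>X. \<forall>s2\<in>X. \<forall>t1\<in>Y. \<forall>t2\<in>Y. s1 \<le> s2 \<and> t1 \<le> t2 \<and>
        (s1 = 0 \<or> s2 = 1 \<or> t1 = 0 \<or> t2 = 1) \<longrightarrow> Vol Q s1 s2 t1 t2 \<ge> 0)"

definition D_SW :: "real set \<Rightarrow> real set \<Rightarrow> (real \<Rightarrow> real \<Rightarrow> real) \<Rightarrow> real \<Rightarrow> real \<Rightarrow> real" where
  "D_SW X Y Q x y = (INF p \<in> {(s,t). s \<in> X \<and> t \<in> Y \<and> x \<le> s \<and> y \<le> t}. Vol Q x (fst p) y (snd p))"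
  \<comment> \<open>D_\<nearrow>: (x,y) is the southwest corner\<close>

definition D_NE :: "real set \<Rightarrow> real set \<Rightarrow> (real \<Rightarrow> real \<Rightarrow> real) \<Rightarrow> real \<Rightarrow> real \<Rightarrow> real" where
  "D_NE X Y Q x y = (INF p \<in> {(s,t). s \<in> X \<and> t \<in> Y \<and> s \<le> x \<and> t \<le> y}. Vol Q (fst p) x (snd p) y)"
  \<comment> \<open>D_\<swarrow>: (x,y) is the northeast corner\<close>

definition D_SE :: "real set \<Rightarrow> real set \<Rightarrow> (real \<Rightarrow> real \<Rightarrow> real) \<Rightarrow> real \<Rightarrow> real \<Rightarrow> real" where
  "D_SE X Y Q x y = (INF p \<in> {(s,t). s \<in> X \<and> t \<in> Y \<and> s \<le> x \<and> y \<le> t}. Vol Q (fst p) x y (snd p))"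
  \<comment> \<open>D_\<nwarrow>: (x,y) is the southeast corner\<close>

definition D_NW :: "real set \<Rightarrow> real set \<Rightarrow> (real \<Rightarrow> real \<Rightarrow> real) \<Rightarrow> real \<Rightarrow> real \<Rightarrow> real" where
  "D_NW X Y Q x y = (INF p \<in> {(s,t). s \<in> X \<and> t \<in> Y \<and> x \<le> s \<and> t \<le> y}. Vol Q x (fst p) (snd p) y)"
  \<comment> \<open>D_\<searrow>: (x,y) is the northwest corner\<close>

definition D_M :: "real set \<Rightarrow> real set \<Rightarrow> (real \<Rightarrow> real \<Rightarrow> real) \<Rightarrow> real \<Rightarrow> real \<Rightarrow> real" where
  "D_M X Y Q x y = min (D_SW X Y Q x y) (D_NE X Y Q x y)"

definition D_O :: "real set \<Rightarrow> real set \<Rightarrow> (real \<Rightarrow> real \<Rightarrow> real) \<Rightarrow> real \<Rightarrow> real \<Rightarrow> real" where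
  "D_O X Y Q x y = min (D_SE X Y Q x y) (D_NW X Y Q x y)"

definition Q_M :: "real set \<Rightarrow> real set \<Rightarrow> (real \<Rightarrow> real \<Rightarrow> real) \<Rightarrow> real \<Rightarrow> real \<Rightarrow> real" where
  "Q_M X Y Q x y = Q x y - D_M X Y Q x y"

definition Q_O :: "real set \<Rightarrow> real set \<Rightarrow> (real \<Rightarrow> real \<Rightarrow> real) \<Rightarrow> real \<Rightarrow> real \<Rightarrow> real" where
  "Q_O X Y Q x y = Q x y + D_O X Y Q x y"

text \<open>Imprecise copula (A,B): both grounded with neutral element 1, and the four inequalities
  for every (possibly degenerate) rectangle [s1,s2] x [t1,t2] with corners in the domain;
  a = (s1,t1) SW, b = (s2,t1) SE, c = (s2,t2) NE, d = (s1,t2) NW.\<close>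
definition imprecise_copula :: "real set \<Rightarrow> real set \<Rightarrow> (real \<Rightarrow> real \<Rightarrow> real) \<Rightarrow> (real \<Rightarrow> real \<Rightarrow> real) \<Rightarrow> bool" where
  "imprecise_copula X Y A B \<longleftrightarrow> grounded X Y A \<and> neutral_one X Y A \<and> grounded X Y B \<and> neutral_one X Y B \<and>
     (\<forall>s1\<in>X. \<forall>s2\<in>X. \<forall>t1\<in>Y. \<forall>t2\<in>Y. s1 \<le> s2 \<and> t1 \<le> t2 \<longrightarrow>
        A s1 t1 + B s2 t2 - A s2 t1 - A s1 t2 \<ge> 0 \<and>
        B s1 t1 + A s2 t2 - A s2 t1 - A s1 t2 \<ge> 0 \<and>
        B s1 t1 + B s2 t2 - B s2 t1 - A s1 t2 \<ge> 0 \<and>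
        B s1 t1 + B s2 t2 - A s2 t1 - B s1 t2 \<ge> 0)"

end

theory Submission
  imports Defs
begin

text \<open>With A_M = A - D_M, the four inequalities making (A, A_M) an imprecise copula on a
  rectangle R with corners a, b, c, d become: D_M(a), D_M(c) \<le> V(R), since R itself competes in
  the infima, and D_M(a) + D_M(c) - V(R) \<le> D_M(b), D_M(d). For the latter, every rectangle R'
  with b (resp. d) as a corner satisfies V(R) + V(R') = V(R1) + V(R2) for rectangles R1, R2 having
  a, c as corners. Defects vanish on the boundary of the square, since every rectangle with a
  corner there has a side on the boundary; so A_M is grounded with neutral element 1.
  The pair (B_O, B) reduces to this case via the reflection flip_y Q (x, y) = x - Q(x, 1 - y),
  which preserves quasi-copulas, turns D_O into D_M at the reflected point, and maps an imprecise
  copula (A, B) to (flip_y B, flip_y A).\<close>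

definition unit_domain :: "real set \<Rightarrow> bool" where
  "unit_domain X \<longleftrightarrow> 0 \<in> X \<and> 1 \<in> X \<and> X \<subseteq> {0..1}"

definition mirror :: "real set \<Rightarrow> real set" where
  "mirror Y = (\<lambda>y. 1 - y) ` Y"

definition flip_y :: "(real \<Rightarrow> real \<Rightarrow> real) \<Rightarrow> real \<Rightarrow> real \<Rightarrow> real" where
  "flip_y Q x y = x - Q x (1 - y)"

lemma mem_mirror_iff: "t \<in> mirror Y \<longleftrightarrow> 1 - t \<in> Y"
  unfolding mirror_def by (auto intro: image_eqI[where x = "1 - t"])

lemma flip_y_flip_y [simp]: "flip_y (flip_y Q) = Q"
  by (simp add: flip_y_def fun_eq_iff)

lemma Vol_flip_y: "Vol (flip_y Q) s1 s2 t1 t2 = Vol Q s1 s2 (1 - t2) (1 - t1)"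
  by (simp add: Vol_def flip_y_def)

lemma unit_domain_mirror: "unit_domain Y \<Longrightarrow> unit_domain (mirror Y)"
  by (auto simp: unit_domain_def mem_mirror_iff)

lemma image_mirror_pairs:
  "(\<lambda>(s, t). (s, 1 - t)) ` {(s, t). s \<in> X \<and> t \<in> Y \<and> P s t} =
   {(s, t). s \<in> X \<and> t \<in> mirror Y \<and> P s (1 - t)}"
proof -
  have "(s, t) = (s, 1 - (1 - t))" for s t :: real by simp
  then show ?thesis by (fastforce simp: mem_mirror_iff image_iff)
qed

lemma D_SE_eq_D_NE_flip_y: "D_SE X Y Q x y = D_NE X (mirror Y) (flip_y Q) x (1 - y)"
proof -
  have "{(s, t). s \<in> X \<and> t \<in> mirror Y \<and> s \<le> x \<and> t \<le> 1 - y} =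
      (\<lambda>(s, t). (s, 1 - t)) ` {(s, t). s \<in> X \<and> t \<in> Y \<and> s \<le> x \<and> y \<le> t}"
    by (subst image_mirror_pairs) auto
  then show ?thesis
    unfolding D_SE_def D_NE_def by (simp add: image_image case_prod_beta Vol_flip_y)
qed

lemma D_NW_eq_D_SW_flip_y: "D_NW X Y Q x y = D_SW X (mirror Y) (flip_y Q) x (1 - y)"
proof -
  have "{(s, t). s \<in> X \<and> t \<in> mirror Y \<and> x \<le> s \<and> 1 - y \<le> t} =
      (\<lambda>(s, t). (s, 1 - t)) ` {(s, t). s \<in> X \<and> t \<in> Y \<and> x \<le> s \<and> t \<le> y}"
    by (subst image_mirror_pairs) auto
  then show ?thesis
    unfolding D_NW_def D_SW_def by (simp add: image_image case_prod_beta Vol_flip_y)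
qed

lemma Q_O_eq_flip_y_Q_M: "Q_O X Y Q = flip_y (Q_M X (mirror Y) (flip_y Q))"
  by (simp add: fun_eq_iff Q_O_def Q_M_def D_O_def D_M_def flip_y_def
      D_SE_eq_D_NE_flip_y D_NW_eq_D_SW_flip_y min.commute)

lemma quasi_copula_flip_y:
  assumes "quasi_copula X Y Q"
  shows "quasi_copula X (mirror Y) (flip_y Q)"
  unfolding quasi_copula_def
proof (intro conjI ballI impI)
  show "grounded X (mirror Y) (flip_y Q)" "neutral_one X (mirror Y) (flip_y Q)"
    using assms by (auto simp: quasi_copula_def grounded_def neutral_one_def flip_y_def mem_mirror_iff)
  fix s1 s2 t1 t2
  assume "s1 \<in> X" "s2 \<in> X" "t1 \<in> mirror Y" "t2 \<in> mirror Y"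
    and "s1 \<le> s2 \<and> t1 \<le> t2 \<and> (s1 = 0 \<or> s2 = 1 \<or> t1 = 0 \<or> t2 = 1)"
  with assms have "0 \<le> Vol Q s1 s2 (1 - t2) (1 - t1)"
    unfolding quasi_copula_def mem_mirror_iff by auto
  then show "0 \<le> Vol (flip_y Q) s1 s2 t1 t2" by (simp add: Vol_flip_y)
qed

lemma imprecise_copula_flip_y:
  assumes "imprecise_copula X (mirror Y) A B"
  shows "imprecise_copula X Y (flip_y B) (flip_y A)"
  unfolding imprecise_copula_def
proof (intro conjI ballI impI)
  show "grounded X Y (flip_y B)" "neutral_one X Y (flip_y B)"
    "grounded X Y (flip_y A)" "neutral_one X Y (flip_y A)"
    using assms by (auto simp: imprecise_copula_def grounded_def neutral_one_def flip_y_def mem_mirror_iff)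
  fix s1 s2 t1 t2
  assume "s1 \<in> X" "s2 \<in> X" "t1 \<in> Y" "t2 \<in> Y" "s1 \<le> s2 \<and> t1 \<le> t2"
  moreover have "1 - t1 \<in> mirror Y" "1 - t2 \<in> mirror Y" "1 - t2 \<le> 1 - t1"
    using calculation by (auto simp: mem_mirror_iff)
  ultimately have
      "B s1 (1 - t2) + A s2 (1 - t1) - A s2 (1 - t2) - A s1 (1 - t1) \<ge> 0"
      "A s1 (1 - t2) + B s2 (1 - t1) - A s2 (1 - t2) - A s1 (1 - t1) \<ge> 0"
      "B s1 (1 - t2) + B s2 (1 - t1) - A s2 (1 - t2) - B s1 (1 - t1) \<ge> 0"
      "B s1 (1 - t2) + B s2 (1 - t1) - B s2 (1 - t2) - A s1 (1 - t1) \<ge> 0"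
    using assms unfolding imprecise_copula_def by blast+
  then show
      "flip_y B s1 t1 + flip_y A s2 t2 - flip_y B s2 t1 - flip_y B s1 t2 \<ge> 0"
      "flip_y A s1 t1 + flip_y B s2 t2 - flip_y B s2 t1 - flip_y B s1 t2 \<ge> 0"
      "flip_y A s1 t1 + flip_y A s2 t2 - flip_y A s2 t1 - flip_y B s1 t2 \<ge> 0"
      "flip_y A s1 t1 + flip_y A s2 t2 - flip_y B s2 t1 - flip_y A s1 t2 \<ge> 0"
    by (simp_all add: flip_y_def)
qed

locale quasi_copula_on =
  fixes X Y :: "real set" and Q :: "real \<Rightarrow> real \<Rightarrow> real"
  assumes unit_domain_X: "unit_domain X" and unit_domain_Y: "unit_domain Y"
    and quasi_copula: "quasi_copula X Y Q"
begin

lemma mem_X: "x \<in> X \<Longrightarrow> 0 \<le> x \<and> x \<le> 1" and mem_Y: "y \<in> Y \<Longrightarrow> 0 \<le> y \<and> y \<le> 1"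
  using unit_domain_X unit_domain_Y by (auto simp: unit_domain_def)

lemma grounded: "grounded X Y Q" and neutral_one: "neutral_one X Y Q"
  using quasi_copula by (simp_all add: quasi_copula_def)

lemma Vol_nonneg_boundary:
  assumes "s1 \<in> X" "s2 \<in> X" "t1 \<in> Y" "t2 \<in> Y" "s1 \<le> s2" "t1 \<le> t2"
    and "s1 = 0 \<or> s2 = 1 \<or> t1 = 0 \<or> t2 = 1"
  shows "0 \<le> Vol Q s1 s2 t1 t2"
  using quasi_copula assms unfolding quasi_copula_def by blast

lemma Q_bounds:
  assumes "x \<in> X" "y \<in> Y"
  shows "0 \<le> Q x y \<and> Q x y \<le> 1"
proof -
  have "0 \<in> X" "1 \<in> X" "0 \<in> Y" using unit_domain_X unit_domain_Y by (auto simp: unit_domain_def)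
  with assms mem_X mem_Y have "0 \<le> Vol Q 0 x 0 y" "0 \<le> Vol Q x 1 0 y"
    by (auto intro: Vol_nonneg_boundary)
  with assms \<open>0 \<in> X\<close> \<open>1 \<in> X\<close> grounded neutral_one mem_Y[OF assms(2)] show ?thesis
    by (auto simp: Vol_def grounded_def neutral_one_def)
qed

lemma Vol_ge_minus_two: "s1 \<in> X \<Longrightarrow> s2 \<in> X \<Longrightarrow> t1 \<in> Y \<Longrightarrow> t2 \<in> Y \<Longrightarrow> -2 \<le> Vol Q s1 s2 t1 t2"
  using Q_bounds[of s1 t1] Q_bounds[of s2 t2] Q_bounds[of s2 t1] Q_bounds[of s1 t2]
  by (auto simp: Vol_def)

lemma le_D_SW_iff:
  assumes "x \<in> X" "y \<in> Y"
  shows "L \<le> D_SW X Y Q x y \<longleftrightarrow> (\<forall>s\<in>X. \<forall>t\<in>Y. x \<le> s \<longrightarrow> y \<le> t \<longrightarrow> L \<le> Vol Q x s y t)"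
proof -
  have "bdd_below ((\<lambda>p. Vol Q x (fst p) y (snd p)) ` {(s, t). s \<in> X \<and> t \<in> Y \<and> x \<le> s \<and> y \<le> t})"
    using assms by (auto intro!: bdd_belowI[where m = "-2"] Vol_ge_minus_two)
  moreover have "{(s, t). s \<in> X \<and> t \<in> Y \<and> x \<le> s \<and> y \<le> t} \<noteq> {}" using assms by auto
  ultimately show ?thesis unfolding D_SW_def by (subst le_cINF_iff) auto
qed

lemma le_D_NE_iff:
  assumes "x \<in> X" "y \<in> Y"
  shows "L \<le> D_NE X Y Q x y \<longleftrightarrow> (\<forall>s\<in>X. \<forall>t\<in>Y. s \<le> x \<longrightarrow> t \<le> y \<longrightarrow> L \<le> Vol Q s x t y)"
proof -
  have "bdd_below ((\<lambda>p. Vol Q (fst p) x (snd p) y) ` {(s, t). s \<in> X \<and> t \<in> Y \<and> s \<le> x \<and> t \<le> y})"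
    using assms by (auto intro!: bdd_belowI[where m = "-2"] Vol_ge_minus_two)
  moreover have "{(s, t). s \<in> X \<and> t \<in> Y \<and> s \<le> x \<and> t \<le> y} \<noteq> {}" using assms by auto
  ultimately show ?thesis unfolding D_NE_def by (subst le_cINF_iff) auto
qed

lemma D_M_le_Vol_SW:
  "x \<in> X \<Longrightarrow> y \<in> Y \<Longrightarrow> s \<in> X \<Longrightarrow> t \<in> Y \<Longrightarrow> x \<le> s \<Longrightarrow> y \<le> t \<Longrightarrow> D_M X Y Q x y \<le> Vol Q x s y t"
  using le_D_SW_iff[of x y "D_SW X Y Q x y"] by (auto simp: D_M_def min.coboundedI1)

lemma D_M_le_Vol_NE:
  "x \<in> X \<Longrightarrow> y \<in> Y \<Longrightarrow> s \<in> X \<Longrightarrow> t \<in> Y \<Longrightarrow> s \<le> x \<Longrightarrow> t \<le> y \<Longrightarrow> D_M X Y Q x y \<le> Vol Q s x t y"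
  using le_D_NE_iff[of x y "D_NE X Y Q x y"] by (auto simp: D_M_def min.coboundedI2)

lemma D_M_boundary:
  assumes "x \<in> X" "y \<in> Y" and boundary: "x = 0 \<or> x = 1 \<or> y = 0 \<or> y = 1"
  shows "D_M X Y Q x y = 0"
proof -
  have "D_M X Y Q x y \<le> Vol Q x x y y" using assms by (intro D_M_le_Vol_SW) auto
  moreover have "0 \<le> D_SW X Y Q x y"
    unfolding le_D_SW_iff[OF assms(1,2)]
  proof (intro ballI impI)
    fix s t assume "s \<in> X" "t \<in> Y" "x \<le> s" "y \<le> t"
    moreover from this have "x = 0 \<or> s = 1 \<or> y = 0 \<or> t = 1"
      using boundary mem_X[of s] mem_Y[of t] by auto
    ultimately show "0 \<le> Vol Q x s y t" using assms by (intro Vol_nonneg_boundary) auto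
  qed
  moreover have "0 \<le> D_NE X Y Q x y"
    unfolding le_D_NE_iff[OF assms(1,2)]
  proof (intro ballI impI)
    fix s t assume "s \<in> X" "t \<in> Y" "s \<le> x" "t \<le> y"
    moreover from this have "s = 0 \<or> x = 1 \<or> t = 0 \<or> y = 1"
      using boundary mem_X[of s] mem_Y[of t] by auto
    ultimately show "0 \<le> Vol Q s x t y" using assms by (intro Vol_nonneg_boundary) auto
  qed
  ultimately show ?thesis by (simp add: D_M_def Vol_def)
qed

context
  fixes s1 s2 t1 t2
  assumes rect: "s1 \<in> X" "s2 \<in> X" "t1 \<in> Y" "t2 \<in> Y" "s1 \<le> s2" "t1 \<le> t2"
begin

lemma D_M_le_SE_corner:
  "D_M X Y Q s1 t1 + D_M X Y Q s2 t2 - Vol Q s1 s2 t1 t2 \<le> D_M X Y Q s2 t1"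
proof -
  let ?L = "D_M X Y Q s1 t1 + D_M X Y Q s2 t2 - Vol Q s1 s2 t1 t2"
  have "?L \<le> D_SW X Y Q s2 t1"
    unfolding le_D_SW_iff[OF rect(2,3)]
  proof (intro ballI impI)
    fix s t assume st: "s \<in> X" "t \<in> Y" "s2 \<le> s" "t1 \<le> t"
    show "?L \<le> Vol Q s2 s t1 t"
    proof (cases "t2 \<le> t")
      case True
      have "D_M X Y Q s1 t1 \<le> Vol Q s1 s t1 t2" using D_M_le_Vol_SW rect st by auto
      moreover have "D_M X Y Q s2 t2 \<le> Vol Q s2 s t2 t" using D_M_le_Vol_SW rect st True by auto
      ultimately show ?thesis unfolding Vol_def by linarith
    next
      case False
      have "D_M X Y Q s1 t1 \<le> Vol Q s1 s t1 t" using D_M_le_Vol_SW rect st by auto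
      moreover have "D_M X Y Q s2 t2 \<le> Vol Q s1 s2 t t2" using D_M_le_Vol_NE rect st False by auto
      ultimately show ?thesis unfolding Vol_def by linarith
    qed
  qed
  moreover have "?L \<le> D_NE X Y Q s2 t1"
    unfolding le_D_NE_iff[OF rect(2,3)]
  proof (intro ballI impI)
    fix s t assume st: "s \<in> X" "t \<in> Y" "s \<le> s2" "t \<le> t1"
    show "?L \<le> Vol Q s s2 t t1"
    proof (cases "s \<le> s1")
      case True
      have "D_M X Y Q s1 t1 \<le> Vol Q s s1 t t1" using D_M_le_Vol_NE rect st True by auto
      moreover have "D_M X Y Q s2 t2 \<le> Vol Q s1 s2 t t2" using D_M_le_Vol_NE rect st by auto
      ultimately show ?thesis unfolding Vol_def by linarith
    next
      case False
      have "D_M X Y Q s1 t1 \<le> Vol Q s1 s t1 t2" using D_M_le_Vol_SW rect st False by auto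
      moreover have "D_M X Y Q s2 t2 \<le> Vol Q s s2 t t2" using D_M_le_Vol_NE rect st by auto
      ultimately show ?thesis unfolding Vol_def by linarith
    qed
  qed
  ultimately show ?thesis by (simp add: D_M_def)
qed

lemma D_M_le_NW_corner:
  "D_M X Y Q s1 t1 + D_M X Y Q s2 t2 - Vol Q s1 s2 t1 t2 \<le> D_M X Y Q s1 t2"
proof -
  let ?L = "D_M X Y Q s1 t1 + D_M X Y Q s2 t2 - Vol Q s1 s2 t1 t2"
  have "?L \<le> D_SW X Y Q s1 t2"
    unfolding le_D_SW_iff[OF rect(1,4)]
  proof (intro ballI impI)
    fix s t assume st: "s \<in> X" "t \<in> Y" "s1 \<le> s" "t2 \<le> t"
    show "?L \<le> Vol Q s1 s t2 t"
    proof (cases "s2 \<le> s")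
      case True
      have "D_M X Y Q s1 t1 \<le> Vol Q s1 s2 t1 t" using D_M_le_Vol_SW rect st by auto
      moreover have "D_M X Y Q s2 t2 \<le> Vol Q s2 s t2 t" using D_M_le_Vol_SW rect st True by auto
      ultimately show ?thesis unfolding Vol_def by linarith
    next
      case False
      have "D_M X Y Q s1 t1 \<le> Vol Q s1 s t1 t" using D_M_le_Vol_SW rect st by auto
      moreover have "D_M X Y Q s2 t2 \<le> Vol Q s s2 t1 t2" using D_M_le_Vol_NE rect st False by auto
      ultimately show ?thesis unfolding Vol_def by linarith
    qed
  qed
  moreover have "?L \<le> D_NE X Y Q s1 t2"
    unfolding le_D_NE_iff[OF rect(1,4)]
  proof (intro ballI impI)
    fix s t assume st: "s \<in> X" "t \<in> Y" "s \<le> s1" "t \<le> t2"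
    show "?L \<le> Vol Q s s1 t t2"
    proof (cases "t \<le> t1")
      case True
      have "D_M X Y Q s1 t1 \<le> Vol Q s s1 t t1" using D_M_le_Vol_NE rect st True by auto
      moreover have "D_M X Y Q s2 t2 \<le> Vol Q s s2 t1 t2" using D_M_le_Vol_NE rect st by auto
      ultimately show ?thesis unfolding Vol_def by linarith
    next
      case False
      have "D_M X Y Q s1 t1 \<le> Vol Q s1 s2 t1 t" using D_M_le_Vol_SW rect st False by auto
      moreover have "D_M X Y Q s2 t2 \<le> Vol Q s s2 t t2" using D_M_le_Vol_NE rect st by auto
      ultimately show ?thesis unfolding Vol_def by linarith
    qed
  qed
  ultimately show ?thesis by (simp add: D_M_def)
qed

end

theorem imprecise_copula_Q_M: "imprecise_copula X Y Q (Q_M X Y Q)"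
  unfolding imprecise_copula_def
proof (intro conjI ballI impI)
  have "0 \<in> X" "1 \<in> X" "0 \<in> Y" "1 \<in> Y" using unit_domain_X unit_domain_Y by (auto simp: unit_domain_def)
  then show "grounded X Y (Q_M X Y Q)" "neutral_one X Y (Q_M X Y Q)"
    using grounded neutral_one by (auto simp: grounded_def neutral_one_def Q_M_def D_M_boundary)
  show "grounded X Y Q" "neutral_one X Y Q" by (fact grounded neutral_one)+
  fix s1 s2 t1 t2 assume "s1 \<in> X" "s2 \<in> X" "t1 \<in> Y" "t2 \<in> Y" "s1 \<le> s2 \<and> t1 \<le> t2"
  then have "D_M X Y Q s1 t1 \<le> Vol Q s1 s2 t1 t2" "D_M X Y Q s2 t2 \<le> Vol Q s1 s2 t1 t2"
    "D_M X Y Q s1 t1 + D_M X Y Q s2 t2 - Vol Q s1 s2 t1 t2 \<le> D_M X Y Q s2 t1"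
    "D_M X Y Q s1 t1 + D_M X Y Q s2 t2 - Vol Q s1 s2 t1 t2 \<le> D_M X Y Q s1 t2"
    by (auto intro: D_M_le_Vol_SW D_M_le_Vol_NE D_M_le_SE_corner D_M_le_NW_corner)
  then show "0 \<le> Q s1 t1 + Q_M X Y Q s2 t2 - Q s2 t1 - Q s1 t2"
    "0 \<le> Q_M X Y Q s1 t1 + Q s2 t2 - Q s2 t1 - Q s1 t2"
    "0 \<le> Q_M X Y Q s1 t1 + Q_M X Y Q s2 t2 - Q_M X Y Q s2 t1 - Q s1 t2"
    "0 \<le> Q_M X Y Q s1 t1 + Q_M X Y Q s2 t2 - Q s2 t1 - Q_M X Y Q s1 t2"
    unfolding Q_M_def Vol_def by linarith+
qed

lemma quasi_copula_on_flip_y: "quasi_copula_on X (mirror Y) (flip_y Q)"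
  using unit_domain_X unit_domain_Y quasi_copula
  by unfold_locales (auto intro: unit_domain_mirror quasi_copula_flip_y)

theorem imprecise_copula_Q_O: "imprecise_copula X Y (Q_O X Y Q) Q"
proof -
  interpret flipped: quasi_copula_on X "mirror Y" "flip_y Q" by (fact quasi_copula_on_flip_y)
  from imprecise_copula_flip_y[OF flipped.imprecise_copula_Q_M] show ?thesis
    by (simp add: Q_O_eq_flip_y_Q_M)
qed

end

lemma unit_domain_unit_interval: "unit_domain {0..1}"
  by (simp add: unit_domain_def)

lemma is_mesh_imp_unit_domain: "is_mesh X \<Longrightarrow> unit_domain X"
  by (simp add: is_mesh_def unit_domain_def)

theorem mainTheorem7:
  shows "(\<forall>A B. quasi_copula {0..1} {0..1} A \<and> quasi_copula {0..1} {0..1} B \<longrightarrow>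
            imprecise_copula {0..1} {0..1} A (Q_M {0..1} {0..1} A) \<and>
            imprecise_copula {0..1} {0..1} (Q_O {0..1} {0..1} B) B)
       \<and> (\<forall>X Y A B. is_mesh X \<and> is_mesh Y \<and> quasi_copula X Y A \<and> quasi_copula X Y B \<longrightarrow>
            imprecise_copula X Y A (Q_M X Y A) \<and>
            imprecise_copula X Y (Q_O X Y B) B)"
proof -
  have "imprecise_copula X Y A (Q_M X Y A) \<and> imprecise_copula X Y (Q_O X Y B) B"
    if "unit_domain X" "unit_domain Y" "quasi_copula X Y A" "quasi_copula X Y B" for X Y A B
    using that by (simp add: quasi_copula_on.intro
        quasi_copula_on.imprecise_copula_Q_M quasi_copula_on.imprecise_copula_Q_O)
  then show ?thesis using unit_domain_unit_interval is_mesh_imp_unit_domain by blast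
qed

end
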